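(* Consider a corpus and a set $\mathcal{A}$ of its documents, with all notation as described in the context. Fix a term $t$ with $c'(t,d_\mathcal{A})\neq 0$, and put $m=(|\mathcal{A}|-1)\,c'(t,d_\mathcal{A})$, so that $T'(t)=T(t)-m$; assume $T(t)>m$. Regard $\mathrm{aver}(\mathcal{A},\mathcal{D})$, given by the closed-form formula in the context, as a function of the single real variable $T(t)$. Every other quantity appearing in that formula ($N$, $N'$, $m$, $D(d)$ and $D'(d)$ for $d\in\mathcal{A}$, $D'(d_\mathcal{A})$, $T(s)$ and $T'(s)$ for terms $s\neq t$, and all summands of $e$ other than $T(t)\ln T(t)$) is treated as an independent constant, while $e$ and $T'(t)$ depend on $T(t)$ through their defining formulas. If $$(|\mathcal{A}|-1)\,D'(d_\mathcal{A}) \;<\; N\,\frac{\ln(T(t))-\ln(T(t)-m)}{\ln(T(t))+1},$$ then $$\frac{\partial\, \mathrm{aver}(\mathcal{A},\mathcal{D})}{\partial T(t)} < 0 .$$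
   Context: **Corpus.** A corpus $\mathcal{D}$ is a finite set of documents, and each document is a multiset ("bag of words") of terms. Write $c(t,d)\ge 0$ for the number of times term $t$ occurs in document $d$. Define - $N=\sum_{t,d}c(t,d)$, - $T(t)=\sum_d c(t,d)$, - $D(d)=\sum_t c(t,d)$. **Entropy.** All logarithms are natural. The entropy of the data under the maximum-likelihood rank-one model, with $p(t)=T(t)/N$ and $q(d)=D(d)/N$, is $$E=-\Big(\sum_t p(t)\ln p(t)+\sum_d q(d)\ln q(d)\Big)=2\ln N-\frac{e}{N},$$ where $$e=\sum_t T(t)\ln T(t)+\sum_d D(d)\ln D(d).$$ **Collaboration.** For a set $\mathcal{A}\subseteq\mathcal{D}$ of documents, introduce a new document $d_\mathcal{A}$ with counts $$c'(t,d_\mathcal{A})=\min_{d\in\mathcal{A}}c(t,d).$$ Set $c'(t,d)=c(t,d)-c'(t,d_\mathcal{A})$ for $d\in\mathcal{A}$, and $c'(t,d)=c(t,d)$ for all other documents. Let $N'$, $T'$, $D'$ be defined from $c'$ in the same way that $N$, $T$, $D$ are defined from $c$. Then - $D'(d_\mathcal{A})=\sum_t c'(t,d_\mathcal{A})$, - $D'(d)=D(d)-D'(d_\mathcal{A})$ for $d\in\mathcal{A}$, - $T'(t)=T(t)-(|\mathcal{A}|-1)\,c'(t,d_\mathcal{A})$, - $N'=N-(|\mathcal{A}|-1)\,D'(d_\mathcal{A})$. Let $E'$ be the entropy of the maximum-likelihood rank-one model fitted to the counts $c'$. **The aver score.** The aver score is $\mathrm{aver}(\mathcal{A},\mathcal{D})=E-E'$.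 It equals $$\mathrm{aver}(\mathcal{A},\mathcal{D})=2\ln(N/N')+\frac{N-N'}{NN'}\,e-\frac{1}{N'}\sum_{s:\,c'(s,d_\mathcal{A})\neq0}\big(T(s)\ln T(s)-T'(s)\ln T'(s)\big)-\frac{1}{N'}\sum_{d\in\mathcal{A}}\big(D(d)\ln D(d)-D'(d)\ln D'(d)\big)+\frac{1}{N'}D'(d_\mathcal{A})\ln D'(d_\mathcal{A}).$$ *)

theory Defs
  imports Complex_Main
begin

definition NN :: "('t::finite \<Rightarrow> 'd \<Rightarrow> nat) \<Rightarrow> 'd set \<Rightarrow> real" where
  "NN c Ds = (\<Sum>t\<in>UNIV. \<Sum>d\<in>Ds. real (c t d))"

definition TT :: "('t \<Rightarrow> 'd \<Rightarrow> nat) \<Rightarrow> 'd set \<Rightarrow> 't \<Rightarrow> real" where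
  "TT c Ds t = (\<Sum>d\<in>Ds. real (c t d))"

definition DD :: "('t::finite \<Rightarrow> 'd \<Rightarrow> nat) \<Rightarrow> 'd \<Rightarrow> real" where
  "DD c d = (\<Sum>t\<in>UNIV. real (c t d))"

definition ent_e :: "('t::finite \<Rightarrow> 'd \<Rightarrow> nat) \<Rightarrow> 'd set \<Rightarrow> real" where
  "ent_e c Ds = (\<Sum>t\<in>UNIV. TT c Ds t * ln (TT c Ds t)) + (\<Sum>d\<in>Ds. DD c d * ln (DD c d))"

text \<open>Collaboration of A: counts of the new document d_A, and primed quantities.\<close>

definition cA :: "('t \<Rightarrow> 'd \<Rightarrow> nat) \<Rightarrow> 'd set \<Rightarrow> 't \<Rightarrow> nat" where
  "cA c A t = Min ((\<lambda>d. c t d) ` A)"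

definition DA' :: "('t::finite \<Rightarrow> 'd \<Rightarrow> nat) \<Rightarrow> 'd set \<Rightarrow> real" where
  "DA' c A = (\<Sum>t\<in>UNIV. real (cA c A t))"

definition DD' :: "('t::finite \<Rightarrow> 'd \<Rightarrow> nat) \<Rightarrow> 'd set \<Rightarrow> 'd \<Rightarrow> real" where
  "DD' c A d = DD c d - DA' c A"

definition TT' :: "('t \<Rightarrow> 'd \<Rightarrow> nat) \<Rightarrow> 'd set \<Rightarrow> 'd set \<Rightarrow> 't \<Rightarrow> real" where
  "TT' c Ds A t = TT c Ds t - (real (card A) - 1) * real (cA c A t)"

definition NN' :: "('t::finite \<Rightarrow> 'd \<Rightarrow> nat) \<Rightarrow> 'd set \<Rightarrow> 'd set \<Rightarrow> real" where
  "NN' c Ds A = NN c Ds - (real (card A) - 1) * DA' c A"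

text \<open>The closed-form aver formula, regarded as a function of the single real variable
x standing for T(t).\<close>

definition aver_fun :: "('t::finite \<Rightarrow> 'd \<Rightarrow> nat) \<Rightarrow> 'd set \<Rightarrow> 'd set \<Rightarrow> 't \<Rightarrow> real \<Rightarrow> real" where
  "aver_fun c Ds A t x =
     (let N = NN c Ds; N' = NN' c Ds A;
          m = (real (card A) - 1) * real (cA c A t);
          e = x * ln x + (ent_e c Ds - TT c Ds t * ln (TT c Ds t));
          Tt' = x - m
      in 2 * ln (N / N') + (N - N') / (N * N') * e
         - (1 / N') * ((\<Sum>s\<in>{s. cA c A s \<noteq> 0 \<and> s \<noteq> t}.
                           TT c Ds s * ln (TT c Ds s) - TT' c Ds A s * ln (TT' c Ds A s))
                       + (x * ln x - Tt' * ln Tt'))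
         - (1 / N') * (\<Sum>d\<in>A. DD c d * ln (DD c d) - DD' c A d * ln (DD' c A d))
         + (1 / N') * DA' c A * ln (DA' c A))"

end

theory Submission
  imports Defs
begin

text \<open>Only two summands of the aver formula depend on \<open>x = T(t)\<close>: the term
  \<open>(N - N')/(N N') e\<close>, contributing \<open>(N - N')/(N N') (ln x + 1)\<close>, and
  \<open>-(x ln x - (x - m) ln (x - m))/N'\<close>, contributing \<open>-(ln x - ln (x - m))/N'\<close>.
  Hence the derivative is \<open>((N - N')/N (ln x + 1) - (ln x - ln (x - m)))/N'\<close>, and
  \<open>N - N' = (|A| - 1) D'(d_A)\<close>.  Its sign is that of the bracket, because
  \<open>N' \<ge> D'(d_A) \<ge> c'(t,d_A) \<ge> 1\<close>; and \<open>ln x \<ge> 0\<close> since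
  \<open>x \<ge> c'(t,d_A) \<ge> 1\<close>, so the bracket is negative exactly under the hypothesis.\<close>

lemma cA_le_count:
  assumes "finite A" and "d \<in> A"
  shows "cA c A s \<le> c s d"
  unfolding cA_def using assms by simp

lemma cA_le_TT:
  assumes "finite Ds" and "A \<subseteq> Ds" and "A \<noteq> {}"
  shows "real (cA c A t) \<le> TT c Ds t"
proof -
  obtain d where d: "d \<in> A" using assms(3) by blast
  have "real (cA c A t) \<le> real (c t d)"
    using cA_le_count[OF finite_subset[OF assms(2,1)] d] by simp
  also have "\<dots> \<le> TT c Ds t"
    unfolding TT_def using d assms(1,2) by (intro member_le_sum) auto
  finally show ?thesis .
qed

lemma cA_le_DA': "real (cA c A t) \<le> DA' c A"
  unfolding DA'_def by (intro member_le_sum) auto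

lemma DA'_le_DD:
  assumes "finite A" and "d \<in> A"
  shows "DA' c A \<le> DD c d"
  unfolding DA'_def DD_def using cA_le_count[OF assms] by (intro sum_mono) simp

lemma card_mult_DA'_le_NN:
  assumes "finite Ds" and "A \<subseteq> Ds"
  shows "real (card A) * DA' c A \<le> NN c Ds"
proof -
  have "real (card A) * DA' c A = (\<Sum>d\<in>A. DA' c A)" by simp
  also have "\<dots> \<le> (\<Sum>d\<in>A. DD c d)"
    using DA'_le_DD[OF finite_subset[OF assms(2,1)]] by (intro sum_mono)
  also have "\<dots> = (\<Sum>s\<in>UNIV. \<Sum>d\<in>A. real (c s d))"
    unfolding DD_def by (rule sum.swap)
  also have "\<dots> \<le> NN c Ds"
    unfolding NN_def using assms by (intro sum_mono sum_mono2) auto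
  finally show ?thesis .
qed

lemma DA'_le_NN':
  assumes "finite Ds" and "A \<subseteq> Ds"
  shows "DA' c A \<le> NN' c Ds A"
  using card_mult_DA'_le_NN[OF assms] unfolding NN'_def by (simp add: algebra_simps)

lemma aver_fun_has_real_derivative:
  assumes "0 < NN c Ds" and "0 < NN' c Ds A" and "x > 0" and "x > (real (card A) - 1) * real (cA c A t)"
  shows "(aver_fun c Ds A t has_real_derivative
           (NN c Ds - NN' c Ds A) / (NN c Ds * NN' c Ds A) * (ln x + 1)
           - 1 / NN' c Ds A * (ln x - ln (x - (real (card A) - 1) * real (cA c A t)))) (at x)"
  unfolding aver_fun_def Let_def using assms
  by (auto intro!: derivative_eq_intros)

lemma aver_derivative_neg:
  fixes N N' l a :: real
  assumes "0 < N'" and "N' \<le> N" and "0 \<le> l"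
    and "N - N' < N * (a / (l + 1))"
  shows "(N - N') / (N * N') * (l + 1) - 1 / N' * a < 0"
proof -
  have "(N - N') * (l + 1) < N * a"
    using assms(3,4) by (simp add: field_simps)
  hence "(N - N') / N * (l + 1) - a < 0"
    using assms(1,2) by (simp add: field_simps)
  moreover have "(N - N') / (N * N') * (l + 1) - 1 / N' * a = ((N - N') / N * (l + 1) - a) / N'"
    using assms(1,2) by (simp add: field_simps)
  ultimately show ?thesis using assms(1) by (simp add: divide_neg_pos)
qed

theorem theorem1:
  fixes c :: "'t::finite \<Rightarrow> 'd \<Rightarrow> nat" and Ds A :: "'d set" and t :: 't
  assumes "finite Ds" and "A \<subseteq> Ds" and "A \<noteq> {}"
    and "cA c A t \<noteq> 0"
    and "TT c Ds t > (real (card A) - 1) * real (cA c A t)"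
    and "(real (card A) - 1) * DA' c A
           < NN c Ds * ((ln (TT c Ds t) - ln (TT c Ds t - (real (card A) - 1) * real (cA c A t)))
                         / (ln (TT c Ds t) + 1))"
  shows "\<exists>D. (aver_fun c Ds A t has_real_derivative D) (at (TT c Ds t)) \<and> D < 0"
proof -
  have cA_ge_1: "1 \<le> real (cA c A t)" using assms(4) by simp
  have T_ge_1: "1 \<le> TT c Ds t" using cA_ge_1 cA_le_TT[OF assms(1-3), of c t] by linarith
  have N'_pos: "0 < NN' c Ds A"
    using cA_ge_1 cA_le_DA'[of c A t] DA'_le_NN'[OF assms(1,2), of c] by linarith
  have "1 \<le> card A"
    using assms(3) finite_subset[OF assms(2,1)] by (simp add: Suc_le_eq card_gt_0_iff)
  hence N'_le_N: "NN' c Ds A \<le> NN c Ds"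
    unfolding NN'_def using cA_ge_1 cA_le_DA'[of c A t] by simp
  have "NN c Ds - NN' c Ds A = (real (card A) - 1) * DA' c A"
    unfolding NN'_def by simp
  with assms(6) have "NN c Ds - NN' c Ds A
      < NN c Ds * ((ln (TT c Ds t) - ln (TT c Ds t - (real (card A) - 1) * real (cA c A t)))
                   / (ln (TT c Ds t) + 1))"
    by simp
  then have "(NN c Ds - NN' c Ds A) / (NN c Ds * NN' c Ds A) * (ln (TT c Ds t) + 1)
      - 1 / NN' c Ds A * (ln (TT c Ds t) - ln (TT c Ds t - (real (card A) - 1) * real (cA c A t)))
      < 0"
    using T_ge_1 by (intro aver_derivative_neg[OF N'_pos N'_le_N]) auto
  moreover have "0 < NN c Ds" using N'_pos N'_le_N by linarith
  ultimately show ?thesis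
    using aver_fun_has_real_derivative[of c Ds A "TT c Ds t" t] N'_pos T_ge_1 assms(5)
    by auto
qed

end
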